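(* Let $(M^n,c,v^m d\nu)$ be a smooth conformal measure space with characteristic constant $\mu$, $n\ge3$, $m\in\mathbb{R}\setminus\{-n,1-n,2-n\}$, and let $\mathcal{R}^W$ be the curvature of $\nabla^W$, $\mathcal{R}^W(x,z)I=-\nabla^W_x\nabla^W_zI+\nabla^W_z\nabla^W_xI+\nabla^W_{[x,z]}I$. In any scale $g\in c$, for a tractor $I$ with top component $\sigma$, middle $\omega$, bottom $\rho$, the tractor $\mathcal{R}^W(x,z)I$ has top component $0$, middle component $A^W(x,z,\omega,\cdot)^\sharp-\sigma\,dP^W(x,z)$, and bottom component $dP^W(x,z)(\omega)$.
   Context: Conformal setting: $(M^n,c)$ a manifold with a conformal class of Riemannian metrics; $\mathcal{E}[w]$ conformal densities of weight $w$ (functions in a scale $g\in c$, multiplied by $e^{ws}$ under $g\mapsto e^{2s}g$). Standard tractor bundle $\mathbb{T}\cong\mathbb{R}\oplus TM\oplus\mathbb{R}$ in a scale, tractors written with top $\sigma$, middle $\omega$, bottom $\rho$, transforming by $\sigma\mapsto e^{s}\sigma$, $\omega\mapsto e^{-s}(\omega+\sigma\nabla s)$, $\rho\mapsto e^{-s}(\rho-g(\nabla s,\omega)-\tfrac12|\nabla s|^2\sigma)$. Tractor metric $\langle I,I\rangle=2\sigma\rho+|\omega|^2$; $X$ has bottom component $1$, others $0$. $\mathbb{D}v$ for $v\in\mathcal{E}[1]$: top $(n)v$, middle $n\nabla v$, bottom $-(\Delta v+\mathrm{J}v)$, $\mathrm{J}$ the trace of the Schouten tensor. SCMS: positive $v\in\mathcal{E}[1]$,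 $m\in\mathbb{R}$, fixed constant $\mu$. In a scale, $\mathrm{Ric}^m_\phi=\mathrm{Ric}-mv^{-1}\nabla^2v$, $R^m_\phi=R-2mv^{-1}\Delta v-m(m-1)v^{-2}|\nabla v|^2$, $\mathrm{J}^W=\frac{1}{2(m+n-1)}(R^m_\phi+m\mu v^{-2})$, $P^W=\frac{1}{m+n-2}(\mathrm{Ric}^m_\phi-\mathrm{J}^Wg)$. The $W$-tractor connection: $\nabla^W_xI$ has top $x\sigma-g(\omega,x)$, middle $\nabla_x\omega+\sigma P^W(x)+\rho x$ ($P^W(x)$ dual to $P^W(x,\cdot)$), bottom $x\rho-P^W(x,\omega)$; this is a connection on $\mathbb{T}$ independent of scale. Curvature conventions: $\mathrm{Rm}(x,z,y,w)=g(-\nabla_x\nabla_zy+\nabla_z\nabla_xy+\nabla_{[x,z]}y,w)$ (so $\mathrm{Ric}(x,z)=\sum_i\mathrm{Rm}(e_i,x,e_i,z)$). Kulkarni–Nomizu product: $(h\wedge k)(x,z,y,w)=h(x,y)k(z,w)+h(z,w)k(x,y)-h(x,w)k(z,y)-h(z,y)k(x,w)$. Weighted Weyl tensor $A^W=\mathrm{Rm}-P^W\wedge g$. $dP^W(x,z)=(\nabla_xP^W)(z,\cdot)-(\nabla_zP^W)(x,\cdot)$, a one-form (identified with a vector via $g$). *)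

theory Defs
  imports "HOL-Analysis.Analysis"
begin

text \<open>Local coordinate model: a scale g of the conformal class is a Riemannian metric on an
open set U of real^'n, given by its matrix of components G p (a symmetric positive definite
matrix at each p in U).  Vector fields are maps U -> real^'n, densities are real functions
(trivialised by the scale).\<close>

definition pd :: "'n::finite \<Rightarrow> (real^'n \<Rightarrow> 'b::real_normed_vector) \<Rightarrow> real^'n \<Rightarrow> 'b" where
  "pd i f p = frechet_derivative f (at p) (axis i 1)"

fun C_k :: "nat \<Rightarrow> (real^'n::finite \<Rightarrow> 'b::real_normed_vector) \<Rightarrow> (real^'n) set \<Rightarrow> bool" where
  "C_k 0 f U = continuous_on U f"
| "C_k (Suc k) f U = ((\<forall>p\<in>U. f differentiable (at p)) \<and> (\<forall>i. C_k k (pd i f) U))"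

definition smooth_on :: "(real^'n::finite) set \<Rightarrow> (real^'n \<Rightarrow> 'b::real_normed_vector) \<Rightarrow> bool" where
  "smooth_on U f = (\<forall>k. C_k k f U)"

definition riemannian_metric_on :: "(real^'n::finite) set \<Rightarrow> (real^'n \<Rightarrow> real^'n^'n) \<Rightarrow> bool" where
  "riemannian_metric_on U G = (smooth_on U G \<and>
     (\<forall>p\<in>U. transpose (G p) = G p \<and> (\<forall>a. a \<noteq> 0 \<longrightarrow> a \<bullet> (G p *v a) > 0)))"

definition gm :: "(real^'n::finite \<Rightarrow> real^'n^'n) \<Rightarrow> real^'n \<Rightarrow> real^'n \<Rightarrow> real^'n \<Rightarrow> real" where
  "gm G p a b = a \<bullet> (G p *v b)"

definition Gi :: "(real^'n::finite \<Rightarrow> real^'n^'n) \<Rightarrow> real^'n \<Rightarrow> real^'n^'n" where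
  "Gi G p = matrix_inv (G p)"

definition sharp :: "(real^'n::finite \<Rightarrow> real^'n^'n) \<Rightarrow> real^'n \<Rightarrow> (real^'n \<Rightarrow> real) \<Rightarrow> real^'n" where
  "sharp G p alpha = Gi G p *v (\<chi> b. alpha (axis b 1))"

definition chr :: "(real^'n::finite \<Rightarrow> real^'n^'n) \<Rightarrow> 'n \<Rightarrow> 'n \<Rightarrow> 'n \<Rightarrow> real^'n \<Rightarrow> real" where
  "chr G k i j p = (1/2) * (\<Sum>l\<in>UNIV. Gi G p $ k $ l *
      (pd i (\<lambda>q. G q $ j $ l) p + pd j (\<lambda>q. G q $ i $ l) p - pd l (\<lambda>q. G q $ i $ j) p))"

definition dirf :: "(real^'n::finite \<Rightarrow> real^'n) \<Rightarrow> (real^'n \<Rightarrow> real) \<Rightarrow> real^'n \<Rightarrow> real" where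
  "dirf X f p = (\<Sum>i\<in>UNIV. X p $ i * pd i f p)"

definition covd :: "(real^'n::finite \<Rightarrow> real^'n^'n) \<Rightarrow> (real^'n \<Rightarrow> real^'n) \<Rightarrow> (real^'n \<Rightarrow> real^'n) \<Rightarrow> real^'n \<Rightarrow> real^'n" where
  "covd G X Y p = (\<chi> k. dirf X (\<lambda>q. Y q $ k) p + (\<Sum>i\<in>UNIV. \<Sum>j\<in>UNIV. chr G k i j p * X p $ i * Y p $ j))"

definition lie :: "(real^'n::finite \<Rightarrow> real^'n) \<Rightarrow> (real^'n \<Rightarrow> real^'n) \<Rightarrow> real^'n \<Rightarrow> real^'n" where
  "lie X Z p = (\<chi> k. dirf X (\<lambda>q. Z q $ k) p - dirf Z (\<lambda>q. X q $ k) p)"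

definition rmvec :: "(real^'n::finite \<Rightarrow> real^'n^'n) \<Rightarrow> (real^'n \<Rightarrow> real^'n) \<Rightarrow> (real^'n \<Rightarrow> real^'n) \<Rightarrow> (real^'n \<Rightarrow> real^'n) \<Rightarrow> real^'n \<Rightarrow> real^'n" where
  "rmvec G X Z Y p = - covd G X (covd G Z Y) p + covd G Z (covd G X Y) p + covd G (lie X Z) Y p"

definition Rm :: "(real^'n::finite \<Rightarrow> real^'n^'n) \<Rightarrow> (real^'n \<Rightarrow> real^'n) \<Rightarrow> (real^'n \<Rightarrow> real^'n) \<Rightarrow> (real^'n \<Rightarrow> real^'n) \<Rightarrow> real^'n \<Rightarrow> real^'n \<Rightarrow> real" where
  "Rm G X Z Y p w = gm G p (rmvec G X Z Y p) w"

text \<open>Ricci tensor components Ric_ab = tr_g Rm(., d_a, ., d_b) (trace over the first and third slots).\<close>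
definition Ric :: "(real^'n::finite \<Rightarrow> real^'n^'n) \<Rightarrow> 'n \<Rightarrow> 'n \<Rightarrow> real^'n \<Rightarrow> real" where
  "Ric G a b p = (\<Sum>i\<in>UNIV. \<Sum>j\<in>UNIV. Gi G p $ i $ j *
      Rm G (\<lambda>_. axis i 1) (\<lambda>_. axis a 1) (\<lambda>_. axis j 1) p (axis b 1))"

definition scal :: "(real^'n::finite \<Rightarrow> real^'n^'n) \<Rightarrow> real^'n \<Rightarrow> real" where
  "scal G p = (\<Sum>a\<in>UNIV. \<Sum>b\<in>UNIV. Gi G p $ a $ b * Ric G a b p)"

definition hess :: "(real^'n::finite \<Rightarrow> real^'n^'n) \<Rightarrow> (real^'n \<Rightarrow> real) \<Rightarrow> 'n \<Rightarrow> 'n \<Rightarrow> real^'n \<Rightarrow> real" where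
  "hess G f a b p = pd a (pd b f) p - (\<Sum>k\<in>UNIV. chr G k a b p * pd k f p)"

definition lap :: "(real^'n::finite \<Rightarrow> real^'n^'n) \<Rightarrow> (real^'n \<Rightarrow> real) \<Rightarrow> real^'n \<Rightarrow> real" where
  "lap G f p = (\<Sum>a\<in>UNIV. \<Sum>b\<in>UNIV. Gi G p $ a $ b * hess G f a b p)"

definition gradsq :: "(real^'n::finite \<Rightarrow> real^'n^'n) \<Rightarrow> (real^'n \<Rightarrow> real) \<Rightarrow> real^'n \<Rightarrow> real" where
  "gradsq G f p = (\<Sum>a\<in>UNIV. \<Sum>b\<in>UNIV. Gi G p $ a $ b * pd a f p * pd b f p)"

definition Ricm :: "(real^'n::finite \<Rightarrow> real^'n^'n) \<Rightarrow> (real^'n \<Rightarrow> real) \<Rightarrow> real \<Rightarrow> 'n \<Rightarrow> 'n \<Rightarrow> real^'n \<Rightarrow> real" where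
  "Ricm G v m a b p = Ric G a b p - m / v p * hess G v a b p"

definition Rscm :: "(real^'n::finite \<Rightarrow> real^'n^'n) \<Rightarrow> (real^'n \<Rightarrow> real) \<Rightarrow> real \<Rightarrow> real^'n \<Rightarrow> real" where
  "Rscm G v m p = scal G p - 2 * m / v p * lap G v p - m * (m - 1) / (v p)^2 * gradsq G v p"

definition JW :: "(real^'n::finite \<Rightarrow> real^'n^'n) \<Rightarrow> (real^'n \<Rightarrow> real) \<Rightarrow> real \<Rightarrow> real \<Rightarrow> real^'n \<Rightarrow> real" where
  "JW G v m mu p = (Rscm G v m p + m * mu / (v p)^2) / (2 * (m + real CARD('n) - 1))"

definition PWc :: "(real^'n::finite \<Rightarrow> real^'n^'n) \<Rightarrow> (real^'n \<Rightarrow> real) \<Rightarrow> real \<Rightarrow> real \<Rightarrow> 'n \<Rightarrow> 'n \<Rightarrow> real^'n \<Rightarrow> real" where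
  "PWc G v m mu a b p = (Ricm G v m a b p - JW G v m mu p * G p $ a $ b) / (m + real CARD('n) - 2)"

definition PW :: "(real^'n::finite \<Rightarrow> real^'n^'n) \<Rightarrow> (real^'n \<Rightarrow> real) \<Rightarrow> real \<Rightarrow> real \<Rightarrow> real^'n \<Rightarrow> real^'n \<Rightarrow> real^'n \<Rightarrow> real" where
  "PW G v m mu p x y = (\<Sum>a\<in>UNIV. \<Sum>b\<in>UNIV. x $ a * y $ b * PWc G v m mu a b p)"

definition covPWc :: "(real^'n::finite \<Rightarrow> real^'n^'n) \<Rightarrow> (real^'n \<Rightarrow> real) \<Rightarrow> real \<Rightarrow> real \<Rightarrow> 'n \<Rightarrow> 'n \<Rightarrow> 'n \<Rightarrow> real^'n \<Rightarrow> real" where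
  "covPWc G v m mu i j k p = pd i (PWc G v m mu j k) p
     - (\<Sum>l\<in>UNIV. chr G l i j p * PWc G v m mu l k p)
     - (\<Sum>l\<in>UNIV. chr G l i k p * PWc G v m mu j l p)"

definition dPW :: "(real^'n::finite \<Rightarrow> real^'n^'n) \<Rightarrow> (real^'n \<Rightarrow> real) \<Rightarrow> real \<Rightarrow> real \<Rightarrow> real^'n \<Rightarrow> real^'n \<Rightarrow> real^'n \<Rightarrow> real^'n \<Rightarrow> real" where
  "dPW G v m mu p x z w = (\<Sum>i\<in>UNIV. \<Sum>j\<in>UNIV. \<Sum>k\<in>UNIV.
      x $ i * z $ j * w $ k * (covPWc G v m mu i j k p - covPWc G v m mu j i k p))"

definition KN_PW_g :: "(real^'n::finite \<Rightarrow> real^'n^'n) \<Rightarrow> (real^'n \<Rightarrow> real) \<Rightarrow> real \<Rightarrow> real \<Rightarrow> real^'n \<Rightarrow> real^'n \<Rightarrow> real^'n \<Rightarrow> real^'n \<Rightarrow> real^'n \<Rightarrow> real" where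
  "KN_PW_g G v m mu p x z y w =
     PW G v m mu p x y * gm G p z w + PW G v m mu p z w * gm G p x y
   - PW G v m mu p x w * gm G p z y - PW G v m mu p z y * gm G p x w"

definition AW :: "(real^'n::finite \<Rightarrow> real^'n^'n) \<Rightarrow> (real^'n \<Rightarrow> real) \<Rightarrow> real \<Rightarrow> real \<Rightarrow> (real^'n \<Rightarrow> real^'n) \<Rightarrow> (real^'n \<Rightarrow> real^'n) \<Rightarrow> (real^'n \<Rightarrow> real^'n) \<Rightarrow> real^'n \<Rightarrow> real^'n \<Rightarrow> real" where
  "AW G v m mu X Z Y p w = Rm G X Z Y p w - KN_PW_g G v m mu p (X p) (Z p) (Y p) w"

text \<open>A section of the standard tractor bundle, written in the scale g as (top, middle, bottom).\<close>
type_synonym 'n tractor = "(real^'n \<Rightarrow> real) \<times> (real^'n \<Rightarrow> real^'n) \<times> (real^'n \<Rightarrow> real)"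

definition ttop :: "('n::finite) tractor \<Rightarrow> real^'n \<Rightarrow> real" where "ttop I = fst I"
definition tmid :: "('n::finite) tractor \<Rightarrow> real^'n \<Rightarrow> real^'n" where "tmid I = fst (snd I)"
definition tbot :: "('n::finite) tractor \<Rightarrow> real^'n \<Rightarrow> real" where "tbot I = snd (snd I)"

definition PWvec :: "(real^'n::finite \<Rightarrow> real^'n^'n) \<Rightarrow> (real^'n \<Rightarrow> real) \<Rightarrow> real \<Rightarrow> real \<Rightarrow> real^'n \<Rightarrow> real^'n \<Rightarrow> real^'n" where
  "PWvec G v m mu p x = sharp G p (PW G v m mu p x)"

definition nablaW :: "(real^'n::finite \<Rightarrow> real^'n^'n) \<Rightarrow> (real^'n \<Rightarrow> real) \<Rightarrow> real \<Rightarrow> real \<Rightarrow> (real^'n \<Rightarrow> real^'n) \<Rightarrow> 'n tractor \<Rightarrow> 'n tractor" where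
  "nablaW G v m mu X I =
    ((\<lambda>p. dirf X (ttop I) p - gm G p (tmid I p) (X p)),
     (\<lambda>p. covd G X (tmid I) p + ttop I p *\<^sub>R PWvec G v m mu p (X p) + tbot I p *\<^sub>R X p),
     (\<lambda>p. dirf X (tbot I) p - PW G v m mu p (X p) (tmid I p)))"

definition tadd :: "('n::finite) tractor \<Rightarrow> 'n tractor \<Rightarrow> 'n tractor" where
  "tadd I J = ((\<lambda>p. ttop I p + ttop J p), (\<lambda>p. tmid I p + tmid J p), (\<lambda>p. tbot I p + tbot J p))"

definition tneg :: "('n::finite) tractor \<Rightarrow> 'n tractor" where
  "tneg I = ((\<lambda>p. - ttop I p), (\<lambda>p. - tmid I p), (\<lambda>p. - tbot I p))"

definition curvW :: "(real^'n::finite \<Rightarrow> real^'n^'n) \<Rightarrow> (real^'n \<Rightarrow> real) \<Rightarrow> real \<Rightarrow> real \<Rightarrow> (real^'n \<Rightarrow> real^'n) \<Rightarrow> (real^'n \<Rightarrow> real^'n) \<Rightarrow> 'n tractor \<Rightarrow> 'n tractor" where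
  "curvW G v m mu X Z I =
     tadd (tadd (tneg (nablaW G v m mu X (nablaW G v m mu Z I))) (nablaW G v m mu Z (nablaW G v m mu X I)))
          (nablaW G v m mu (lie X Z) I)"

end

theory Submission
  imports Defs
begin

text \<open>In
  \<open>-\<nabla>\<^sup>W\<^sub>x\<nabla>\<^sup>W\<^sub>zI + \<nabla>\<^sup>W\<^sub>z\<nabla>\<^sup>W\<^sub>xI + \<nabla>\<^sup>W\<^bsub>[x,z]\<^esub>I\<close> the second
  derivatives of the components of I cancel by \<open>x(zf) - z(xf) = [x,z]f\<close> (which rests on
  Schwarz's theorem) and the torsion-freeness of \<open>\<nabla>\<close>; derivatives of inner products
  are expanded by metric compatibility \<open>\<nabla>g = 0\<close>. What survives in the middle slot is
  \<open>Rm(x,z,\<omega>,\<cdot>)\<close>, the \<open>P\<^sup>W \<and> g\<close> terms and \<open>\<sigma> dP\<^sup>W(x,z)\<close>; the other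
  terms of all three slots pair off by the symmetry of \<open>P\<^sup>W\<close>, which in turn comes from the
  symmetry of the Hessian and of the Ricci tensor, i.e. the pair symmetry of Rm.\<close>

section \<open>Partial derivatives and smoothness\<close>

lemma pd_eq_derivative: "(f has_derivative f') (at p) \<Longrightarrow> pd i f p = f' (axis i 1)"
  unfolding pd_def by (metis frechet_derivative_at)

lemma has_derivative_frechet_derivative:
  "f differentiable (at p) \<Longrightarrow> (f has_derivative frechet_derivative f (at p)) (at p)"
  by (simp add: frechet_derivative_works)

lemma pd_const [simp]: "pd i (\<lambda>x. c) = (\<lambda>x. 0)"
  unfolding pd_def by (simp add: fun_eq_iff)

lemma pd_bounded_linear:
  "bounded_linear L \<Longrightarrow> f differentiable (at p) \<Longrightarrow> pd i (\<lambda>x. L (f x)) p = L (pd i f p)"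
  by (rule pd_eq_derivative[OF bounded_linear.has_derivative, OF _ has_derivative_frechet_derivative,
        unfolded pd_def[symmetric]])

lemma pd_add:
  "f differentiable (at p) \<Longrightarrow> g differentiable (at p) \<Longrightarrow>
   pd i (\<lambda>x. f x + g x) p = pd i f p + pd i g p"
  by (rule pd_eq_derivative[OF has_derivative_add[OF has_derivative_frechet_derivative
        has_derivative_frechet_derivative], unfolded pd_def[symmetric]])

lemma pd_diff:
  "f differentiable (at p) \<Longrightarrow> g differentiable (at p) \<Longrightarrow>
   pd i (\<lambda>x. f x - g x) p = pd i f p - pd i g p"
  by (rule pd_eq_derivative[OF has_derivative_diff[OF has_derivative_frechet_derivative
        has_derivative_frechet_derivative], unfolded pd_def[symmetric]])

lemma pd_mult:
  fixes f g :: "real^'n::finite \<Rightarrow> real"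
  shows "f differentiable (at p) \<Longrightarrow> g differentiable (at p) \<Longrightarrow>
    pd i (\<lambda>x. f x * g x) p = pd i f p * g p + f p * pd i g p"
  by (subst pd_eq_derivative[OF has_derivative_mult[OF has_derivative_frechet_derivative
        has_derivative_frechet_derivative]]) (simp_all add: pd_def)

lemma pd_inverse:
  fixes f :: "real^'n::finite \<Rightarrow> real"
  shows "f differentiable (at p) \<Longrightarrow> f p \<noteq> 0 \<Longrightarrow>
    pd i (\<lambda>x. inverse (f x)) p = - (inverse (f p) * pd i f p * inverse (f p))"
  by (subst pd_eq_derivative[OF Deriv.has_derivative_inverse[OF _ has_derivative_frechet_derivative]])
     (simp_all add: pd_def)

lemma pd_sum:
  "(\<And>a. a \<in> A \<Longrightarrow> F a differentiable (at p)) \<Longrightarrow>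
   pd i (\<lambda>x. \<Sum>a\<in>A. F a x) p = (\<Sum>a\<in>A. pd i (F a) p)"
  by (subst pd_eq_derivative[OF has_derivative_sum[OF has_derivative_frechet_derivative]])
     (simp_all add: pd_def)

lemma pd_transform_open:
  "f differentiable (at p) \<Longrightarrow> open U \<Longrightarrow> p \<in> U \<Longrightarrow> (\<And>q. q \<in> U \<Longrightarrow> f q = g q) \<Longrightarrow>
   pd i f p = pd i g p"
  unfolding pd_def by (metis frechet_derivative_transform_within_open)

lemma differentiable_transform_open:
  "f differentiable (at p) \<Longrightarrow> open U \<Longrightarrow> p \<in> U \<Longrightarrow> (\<And>q. q \<in> U \<Longrightarrow> f q = g q) \<Longrightarrow>
   g differentiable (at p)"
  unfolding differentiable_def by (metis has_derivative_transform_within_open)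

lemma C_k_SucD: "C_k (Suc k) f U \<Longrightarrow> C_k k f U"
proof (induction k arbitrary: f)
  case 0
  then show ?case
    by (auto intro!: continuous_at_imp_continuous_on differentiable_imp_continuous_within)
qed auto

lemma C_k_transform_open:
  "open U \<Longrightarrow> C_k k f U \<Longrightarrow> (\<And>q. q \<in> U \<Longrightarrow> f q = g q) \<Longrightarrow> C_k k g U"
proof (induction k arbitrary: f g)
  case 0
  then show ?case using continuous_on_cong by force
next
  case (Suc k)
  then have d: "\<forall>p\<in>U. f differentiable (at p)" and c: "\<forall>i. C_k k (pd i f) U" by auto
  have "C_k k (pd i g) U" for i
    using Suc.IH[OF Suc.prems(1) c[rule_format]] pd_transform_open d Suc.prems by blast
  then show ?case
    using d Suc.prems by (auto intro: differentiable_transform_open)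
qed

lemma C_k_bounded_linear:
  "open U \<Longrightarrow> bounded_linear L \<Longrightarrow> C_k k f U \<Longrightarrow> C_k k (\<lambda>x. L (f x)) U"
proof (induction k arbitrary: f)
  case 0
  then show ?case by (auto intro: continuous_on_compose2[of UNIV L] linear_continuous_on)
next
  case (Suc k)
  then have d: "\<forall>p\<in>U. f differentiable (at p)" and c: "\<forall>i. C_k k (pd i f) U" by auto
  have "C_k k (pd i (\<lambda>x. L (f x))) U" for i
    by (rule C_k_transform_open[OF Suc.prems(1) Suc.IH[OF Suc.prems(1,2) c[rule_format]]])
       (use d in \<open>simp add: pd_bounded_linear[OF Suc.prems(2)]\<close>)
  moreover have "\<forall>p\<in>U. (\<lambda>x. L (f x)) differentiable (at p)"
    using d bounded_linear.has_derivative[OF Suc.prems(2)] unfolding differentiable_def by blast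
  ultimately show ?case by simp
qed

lemma C_k_add: "open U \<Longrightarrow> C_k k f U \<Longrightarrow> C_k k g U \<Longrightarrow> C_k k (\<lambda>x. f x + g x) U"
proof (induction k arbitrary: f g)
  case 0
  then show ?case by (auto intro: continuous_on_add)
next
  case (Suc k)
  then have d: "\<forall>p\<in>U. f differentiable (at p)" "\<forall>p\<in>U. g differentiable (at p)"
    and c: "\<forall>i. C_k k (pd i f) U" "\<forall>i. C_k k (pd i g) U" by auto
  have "C_k k (pd i (\<lambda>x. f x + g x)) U" for i
    by (rule C_k_transform_open[OF Suc.prems(1) Suc.IH[OF Suc.prems(1) c(1)[rule_format] c(2)[rule_format]]])
       (use d in \<open>simp add: pd_add\<close>)
  then show ?case using d by simp
qed

lemma C_k_const: "C_k k (\<lambda>x. c) U"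
  by (induction k arbitrary: c) simp_all

lemma C_k_mult:
  fixes f g :: "real^'n::finite \<Rightarrow> real"
  shows "open U \<Longrightarrow> C_k k f U \<Longrightarrow> C_k k g U \<Longrightarrow> C_k k (\<lambda>x. f x * g x) U"
proof (induction k arbitrary: f g)
  case 0
  then show ?case by (auto intro: continuous_on_mult)
next
  case (Suc k)
  then have d: "\<forall>p\<in>U. f differentiable (at p)" "\<forall>p\<in>U. g differentiable (at p)"
    and c: "\<forall>i. C_k k (pd i f) U" "\<forall>i. C_k k (pd i g) U" by auto
  have fg: "C_k k f U" "C_k k g U" using Suc.prems C_k_SucD by blast+
  have "C_k k (pd i (\<lambda>x. f x * g x)) U" for i
  proof (rule C_k_transform_open[OF Suc.prems(1)])
    show "C_k k (\<lambda>x. pd i f x * g x + f x * pd i g x) U"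
      by (rule C_k_add[OF Suc.prems(1) Suc.IH[OF Suc.prems(1) c(1)[rule_format] fg(2)]
            Suc.IH[OF Suc.prems(1) fg(1) c(2)[rule_format]]])
  qed (use d in \<open>simp add: pd_mult\<close>)
  moreover have "\<forall>p\<in>U. (\<lambda>x. f x * g x) differentiable (at p)"
    using d by (auto intro: differentiable_mult)
  ultimately show ?case by (simp only: C_k.simps) blast
qed

lemma C_k_inverse:
  fixes f :: "real^'n::finite \<Rightarrow> real"
  shows "open U \<Longrightarrow> \<forall>x\<in>U. f x \<noteq> 0 \<Longrightarrow> C_k k f U \<Longrightarrow> C_k k (\<lambda>x. inverse (f x)) U"
proof (induction k arbitrary: f)
  case 0
  then show ?case by (auto intro: continuous_on_inverse)
next
  case (Suc k)
  then have d: "\<forall>p\<in>U. f differentiable (at p)" and c: "\<forall>i. C_k k (pd i f) U" by auto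
  have inv: "C_k k (\<lambda>x. inverse (f x)) U" using Suc C_k_SucD by blast
  have "C_k k (pd i (\<lambda>x. inverse (f x))) U" for i
  proof (rule C_k_transform_open[OF Suc.prems(1)])
    show "C_k k (\<lambda>x. - (inverse (f x) * pd i f x * inverse (f x))) U"
      using C_k_bounded_linear[OF Suc.prems(1) bounded_linear_minus[OF bounded_linear_ident],
          OF C_k_mult[OF Suc.prems(1) C_k_mult[OF Suc.prems(1) inv c[rule_format]] inv]] by simp
  qed (use d Suc.prems(2) in \<open>simp add: pd_inverse\<close>)
  moreover have "\<forall>p\<in>U. (\<lambda>x. inverse (f x)) differentiable (at p)"
    using d Suc.prems(2) by (auto intro: differentiable_inverse)
  ultimately show ?case by (simp only: C_k.simps) blast
qed

lemma smooth_on_transform_open: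
  "open U \<Longrightarrow> smooth_on U f \<Longrightarrow> (\<And>q. q \<in> U \<Longrightarrow> f q = g q) \<Longrightarrow> smooth_on U g"
  unfolding smooth_on_def using C_k_transform_open by blast

lemma smooth_on_pd: "smooth_on U f \<Longrightarrow> smooth_on U (pd i f)"
  unfolding smooth_on_def by (metis C_k.simps(2))

lemma smooth_on_imp_differentiable: "smooth_on U f \<Longrightarrow> p \<in> U \<Longrightarrow> f differentiable (at p)"
  unfolding smooth_on_def by (metis C_k.simps(2))

lemma smooth_on_imp_continuous_on: "smooth_on U f \<Longrightarrow> continuous_on U f"
  unfolding smooth_on_def by (metis C_k.simps(1))

lemma smooth_on_bounded_linear:
  "open U \<Longrightarrow> bounded_linear L \<Longrightarrow> smooth_on U f \<Longrightarrow> smooth_on U (\<lambda>x. L (f x))"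
  unfolding smooth_on_def using C_k_bounded_linear by blast

lemma smooth_on_vec_nth: "open U \<Longrightarrow> smooth_on U f \<Longrightarrow> smooth_on U (\<lambda>x. f x $ j)"
  using smooth_on_bounded_linear[OF _ bounded_linear_vec_nth] by blast

lemma smooth_on_add: "open U \<Longrightarrow> smooth_on U f \<Longrightarrow> smooth_on U g \<Longrightarrow> smooth_on U (\<lambda>x. f x + g x)"
  unfolding smooth_on_def using C_k_add by blast

lemma smooth_on_const: "smooth_on U (\<lambda>x. c)"
  unfolding smooth_on_def using C_k_const by blast

lemma smooth_on_mult:
  "open U \<Longrightarrow> smooth_on U f \<Longrightarrow> smooth_on U g \<Longrightarrow> smooth_on U (\<lambda>x. f x * g x :: real)"
  unfolding smooth_on_def using C_k_mult by blast

lemma smooth_on_inverse: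
  "open U \<Longrightarrow> \<forall>x\<in>U. f x \<noteq> 0 \<Longrightarrow> smooth_on U f \<Longrightarrow> smooth_on U (\<lambda>x. inverse (f x) :: real)"
  unfolding smooth_on_def using C_k_inverse by blast

lemma smooth_on_uminus: "open U \<Longrightarrow> smooth_on U f \<Longrightarrow> smooth_on U (\<lambda>x. - f x)"
  using smooth_on_bounded_linear[OF _ bounded_linear_minus[OF bounded_linear_ident]] by auto

lemma smooth_on_diff: "open U \<Longrightarrow> smooth_on U f \<Longrightarrow> smooth_on U g \<Longrightarrow> smooth_on U (\<lambda>x. f x - g x)"
  using smooth_on_add[of U f "\<lambda>x. - g x"] smooth_on_uminus by auto

lemma smooth_on_divide:
  "open U \<Longrightarrow> \<forall>x\<in>U. g x \<noteq> 0 \<Longrightarrow> smooth_on U f \<Longrightarrow> smooth_on U g \<Longrightarrow> smooth_on U (\<lambda>x. f x / g x :: real)"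
  using smooth_on_mult[of U f "\<lambda>x. inverse (g x)"] smooth_on_inverse by (auto simp: divide_inverse)

lemma smooth_on_divide_const: "open U \<Longrightarrow> smooth_on U f \<Longrightarrow> smooth_on U (\<lambda>x. f x / c :: real)"
  using smooth_on_mult[OF _ _ smooth_on_const, of U f "1 / c"] by simp

lemma smooth_on_sum:
  "open U \<Longrightarrow> (\<And>a. a \<in> A \<Longrightarrow> smooth_on U (F a)) \<Longrightarrow> smooth_on U (\<lambda>x. \<Sum>a\<in>A. F a x)"
  by (induction A rule: infinite_finite_induct) (simp_all add: smooth_on_const smooth_on_add)

lemma smooth_on_prod:
  "open U \<Longrightarrow> (\<And>a. a \<in> A \<Longrightarrow> smooth_on U (F a)) \<Longrightarrow> smooth_on U (\<lambda>x. \<Prod>a\<in>A. F a x :: real)"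
  by (induction A rule: infinite_finite_induct) (simp_all add: smooth_on_const smooth_on_mult)

lemma smooth_on_power: "open U \<Longrightarrow> smooth_on U f \<Longrightarrow> smooth_on U (\<lambda>x. f x ^ k :: real)"
  by (induction k) (simp_all add: smooth_on_const smooth_on_mult)

lemma smooth_on_det:
  fixes A :: "real^'n::finite \<Rightarrow> real^'m::finite^'m"
  shows "open U \<Longrightarrow> (\<And>r c. smooth_on U (\<lambda>q. A q $ r $ c)) \<Longrightarrow> smooth_on U (\<lambda>q. det (A q))"
  unfolding det_def
  by (intro smooth_on_sum smooth_on_mult smooth_on_const smooth_on_prod) auto

lemma has_real_derivative_coordinate_line:
  fixes F :: "real^'n::finite \<Rightarrow> real"
  assumes "F differentiable (at (a + s *\<^sub>R axis k 1))"
  shows "((\<lambda>t. F (a + t *\<^sub>R axis k 1)) has_real_derivative pd k F (a + s *\<^sub>R axis k 1)) (at s)"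
proof -
  let ?F' = "frechet_derivative F (at (a + s *\<^sub>R axis k 1))"
  have dF: "(F has_derivative ?F') (at (a + s *\<^sub>R axis k 1))"
    using assms by (rule has_derivative_frechet_derivative)
  have "((\<lambda>t. a + t *\<^sub>R axis k 1) has_derivative (\<lambda>t. t *\<^sub>R axis k 1)) (at s)"
    by (auto intro!: derivative_eq_intros)
  from has_derivative_compose[OF this dF]
  have "((\<lambda>t. F (a + t *\<^sub>R axis k 1)) has_derivative (\<lambda>t. ?F' (t *\<^sub>R axis k 1))) (at s)" .
  moreover have "(\<lambda>t. ?F' (t *\<^sub>R axis k 1)) = (*) (pd k F (a + s *\<^sub>R axis k 1))"
    using linear_scale[OF has_derivative_linear[OF dF]] by (simp add: pd_def fun_eq_iff mult.commute)
  ultimately show ?thesis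
    unfolding has_field_derivative_def by simp
qed

lemma second_difference_mean_value:
  fixes f :: "real^'n::finite \<Rightarrow> real"
  assumes f: "smooth_on U f" and h: "h > 0"
    and square: "\<And>s t. 0 \<le> s \<Longrightarrow> s \<le> h \<Longrightarrow> 0 \<le> t \<Longrightarrow> t \<le> h \<Longrightarrow> p + s *\<^sub>R axis i 1 + t *\<^sub>R axis j 1 \<in> U"
  obtains s t where "0 < s" "s < h" "0 < t" "t < h"
    "f (p + h *\<^sub>R axis i 1 + h *\<^sub>R axis j 1) - f (p + h *\<^sub>R axis i 1) - f (p + h *\<^sub>R axis j 1) + f p
       = h^2 * pd j (pd i f) (p + s *\<^sub>R axis i 1 + t *\<^sub>R axis j 1)"
proof -
  define ei :: "real^'n" where "ei = axis i 1"
  define ej :: "real^'n" where "ej = axis j 1"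
  have square': "p + s *\<^sub>R ei + t *\<^sub>R ej \<in> U" if "0 \<le> s" "s \<le> h" "0 \<le> t" "t \<le> h" for s t
    using square[OF that] unfolding ei_def ej_def .
  define \<phi> where "\<phi> s = f ((p + h *\<^sub>R ej) + s *\<^sub>R ei) - f (p + s *\<^sub>R ei)" for s
  have "DERIV \<phi> s :> pd i f ((p + h *\<^sub>R ej) + s *\<^sub>R ei) - pd i f (p + s *\<^sub>R ei)" if "0 \<le> s" "s \<le> h" for s
  proof -
    have "(p + h *\<^sub>R ej) + s *\<^sub>R ei \<in> U" "p + s *\<^sub>R ei \<in> U"
      using square'[of s h] square'[of s 0] that h by (simp_all add: algebra_simps)
    then show ?thesis unfolding \<phi>_def ei_def
      by (intro DERIV_diff has_real_derivative_coordinate_line smooth_on_imp_differentiable[OF f])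
         (auto simp: ei_def)
  qed
  from MVT2[OF h this] obtain s where s: "0 < s" "s < h"
    and e1: "\<phi> h - \<phi> 0 = h * (pd i f ((p + h *\<^sub>R ej) + s *\<^sub>R ei) - pd i f (p + s *\<^sub>R ei))"
    by auto
  define \<psi> where "\<psi> t = pd i f ((p + s *\<^sub>R ei) + t *\<^sub>R ej)" for t
  have "DERIV \<psi> t :> pd j (pd i f) ((p + s *\<^sub>R ei) + t *\<^sub>R ej)" if "0 \<le> t" "t \<le> h" for t
  proof -
    have "(p + s *\<^sub>R ei) + t *\<^sub>R ej \<in> U" using square'[of s t] that s by simp
    then show ?thesis unfolding \<psi>_def ej_def
      by (intro has_real_derivative_coordinate_line smooth_on_imp_differentiable[OF smooth_on_pd[OF f]])
         (auto simp: ej_def)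
  qed
  from MVT2[OF h this] obtain t where t: "0 < t" "t < h"
    and e2: "\<psi> h - \<psi> 0 = h * pd j (pd i f) ((p + s *\<^sub>R ei) + t *\<^sub>R ej)"
    by auto
  have "\<psi> h - \<psi> 0 = pd i f ((p + h *\<^sub>R ej) + s *\<^sub>R ei) - pd i f (p + s *\<^sub>R ei)"
    unfolding \<psi>_def by (simp add: algebra_simps)
  then have "\<phi> h - \<phi> 0 = h^2 * pd j (pd i f) (p + s *\<^sub>R ei + t *\<^sub>R ej)"
    using e1 e2 by (simp add: power2_eq_square)
  moreover have "\<phi> h - \<phi> 0 = f (p + h *\<^sub>R ei + h *\<^sub>R ej) - f (p + h *\<^sub>R ei) - f (p + h *\<^sub>R ej) + f p"
    unfolding \<phi>_def by (simp add: algebra_simps)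
  ultimately show ?thesis using that s t unfolding ei_def ej_def by metis
qed

lemma dist_coordinate_square:
  "dist (p + s *\<^sub>R axis a 1 + t *\<^sub>R axis b 1) (p :: real^'n::finite) \<le> \<bar>s\<bar> + \<bar>t\<bar>"
proof -
  have "dist (p + s *\<^sub>R axis a 1 + t *\<^sub>R axis b 1) p = norm (s *\<^sub>R axis a 1 + t *\<^sub>R axis b 1 :: real^'n)"
    by (simp add: dist_norm)
  also have "\<dots> \<le> norm (s *\<^sub>R axis a 1 :: real^'n) + norm (t *\<^sub>R axis b 1 :: real^'n)"
    by (rule norm_triangle_ineq)
  finally show ?thesis by simp
qed

text \<open>Schwarz's theorem: both orders of differentiation give the same second difference, and
  the continuity of the mixed partials lets the square shrink to p.\<close>
lemma pd_commute:
  fixes f :: "real^'n::finite \<Rightarrow> real"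
  assumes U: "open U" and f: "smooth_on U f" and p: "p \<in> U"
  shows "pd i (pd j f) p = pd j (pd i f) p"
proof (rule ccontr)
  define g1 where "g1 = pd j (pd i f)"
  define g2 where "g2 = pd i (pd j f)"
  define e where "e = \<bar>g1 p - g2 p\<bar> / 2"
  assume "pd i (pd j f) p \<noteq> pd j (pd i f) p"
  then have e: "e > 0" unfolding e_def g1_def g2_def by simp
  have "continuous (at p) g1" "continuous (at p) g2" unfolding g1_def g2_def
    using smooth_on_imp_continuous_on[OF smooth_on_pd[OF smooth_on_pd[OF f]]] U p
      continuous_on_eq_continuous_at by blast+
  with e obtain d1 d2 where d: "d1 > 0" "\<And>x. dist x p < d1 \<Longrightarrow> dist (g1 x) (g1 p) < e"
    "d2 > 0" "\<And>x. dist x p < d2 \<Longrightarrow> dist (g2 x) (g2 p) < e"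
    unfolding continuous_at_eps_delta by metis
  obtain r where r: "r > 0" "ball p r \<subseteq> U" using U p open_contains_ball by blast
  define h where "h = min r (min d1 d2) / 3"
  have h: "h > 0" using r d unfolding h_def by simp
  have near: "dist (p + s *\<^sub>R axis a 1 + t *\<^sub>R axis b 1) p < min r (min d1 d2)"
    if "0 \<le> s" "s \<le> h" "0 \<le> t" "t \<le> h" for s t and a b :: 'n
    using dist_coordinate_square[of p s a t b] that h unfolding h_def by linarith
  then have square: "p + s *\<^sub>R axis a 1 + t *\<^sub>R axis b 1 \<in> U"
    if "0 \<le> s" "s \<le> h" "0 \<le> t" "t \<le> h" for s t and a b :: 'n
    using that r by (auto simp: dist_commute)
  obtain s1 t1 where st1: "0 < s1" "s1 < h" "0 < t1" "t1 < h" and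
    E1: "f (p + h *\<^sub>R axis i 1 + h *\<^sub>R axis j 1) - f (p + h *\<^sub>R axis i 1) - f (p + h *\<^sub>R axis j 1) + f p
       = h^2 * g1 (p + s1 *\<^sub>R axis i 1 + t1 *\<^sub>R axis j 1)"
    using second_difference_mean_value[OF f h square] unfolding g1_def by blast
  obtain s2 t2 where st2: "0 < s2" "s2 < h" "0 < t2" "t2 < h" and
    E2: "f (p + h *\<^sub>R axis j 1 + h *\<^sub>R axis i 1) - f (p + h *\<^sub>R axis j 1) - f (p + h *\<^sub>R axis i 1) + f p
       = h^2 * g2 (p + s2 *\<^sub>R axis j 1 + t2 *\<^sub>R axis i 1)"
    using second_difference_mean_value[OF f h square] unfolding g2_def by blast
  have swap: "p + h *\<^sub>R axis j 1 + h *\<^sub>R axis i 1 = p + h *\<^sub>R axis i 1 + h *\<^sub>R axis j 1"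
    by (simp add: algebra_simps)
  from E1 E2[unfolded swap] have "h^2 * g1 (p + s1 *\<^sub>R axis i 1 + t1 *\<^sub>R axis j 1) = h^2 * g2 (p + s2 *\<^sub>R axis j 1 + t2 *\<^sub>R axis i 1)"
    by linarith
  with h have "g1 (p + s1 *\<^sub>R axis i 1 + t1 *\<^sub>R axis j 1) = g2 (p + s2 *\<^sub>R axis j 1 + t2 *\<^sub>R axis i 1)"
    by simp
  moreover have "dist (g1 (p + s1 *\<^sub>R axis i 1 + t1 *\<^sub>R axis j 1)) (g1 p) < e"
    "dist (g2 (p + s2 *\<^sub>R axis j 1 + t2 *\<^sub>R axis i 1)) (g2 p) < e"
    using d near[of s1 t1 i j] near[of s2 t2 j i] st1 st2 by auto
  ultimately have "\<bar>g1 p - g2 p\<bar> < 2 * e" unfolding dist_real_def by linarith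
  then show False unfolding e_def by simp
qed

section \<open>Riemannian metrics in a chart\<close>

lemma transpose_eq_iff_symmetric: "transpose A = A \<longleftrightarrow> (\<forall>a b. A $ a $ b = A $ b $ a)"
  by (auto simp: transpose_def vec_eq_iff)

lemma matrix_vector_mult_inner: "(A *v x) \<bullet> y = x \<bullet> (transpose A *v (y :: real^'n::finite))"
  by (metis dot_lmul_matrix vector_transpose_matrix)

locale riemannian_chart =
  fixes U :: "(real^'n::finite) set" and G :: "real^'n \<Rightarrow> real^'n^'n"
  assumes open_U: "open U" and metric: "riemannian_metric_on U G"
begin

lemma smooth_on_metric_entry: "smooth_on U (\<lambda>q. G q $ a $ b)"
  using metric smooth_on_vec_nth[OF open_U smooth_on_vec_nth[OF open_U]]
  unfolding riemannian_metric_on_def by blast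

lemma metric_transpose: "q \<in> U \<Longrightarrow> transpose (G q) = G q"
  using metric unfolding riemannian_metric_on_def by blast

lemma metric_sym: "q \<in> U \<Longrightarrow> G q $ a $ b = G q $ b $ a"
  using metric_transpose transpose_eq_iff_symmetric by blast

lemma metric_pos: "q \<in> U \<Longrightarrow> x \<noteq> 0 \<Longrightarrow> x \<bullet> (G q *v x) > 0"
  using metric unfolding riemannian_metric_on_def by blast

lemma metric_invertible: "q \<in> U \<Longrightarrow> invertible (G q)"
proof -
  assume "q \<in> U"
  then have "\<forall>x. G q *v x = 0 \<longrightarrow> x = 0"
    using metric_pos by (metis inner_zero_right less_irrefl)
  then show ?thesis unfolding invertible_left_inverse matrix_left_invertible_ker[symmetric] .
qed

lemma metric_mult_inverse: "q \<in> U \<Longrightarrow> G q ** Gi G q = mat 1 \<and> Gi G q ** G q = mat 1"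
  unfolding Gi_def matrix_inv_def using metric_invertible[unfolded invertible_def] by (rule someI_ex)

lemma inverse_metric_transpose: "q \<in> U \<Longrightarrow> transpose (Gi G q) = Gi G q"
proof -
  assume q: "q \<in> U"
  have "transpose (Gi G q) = transpose (Gi G q) ** (G q ** Gi G q)"
    using metric_mult_inverse[OF q] by simp
  also have "\<dots> = transpose (G q ** Gi G q) ** Gi G q"
    by (simp add: matrix_mul_assoc matrix_transpose_mul metric_transpose[OF q])
  also have "\<dots> = Gi G q" using metric_mult_inverse[OF q] by simp
  finally show ?thesis .
qed

lemma inverse_metric_sym: "q \<in> U \<Longrightarrow> Gi G q $ a $ b = Gi G q $ b $ a"
  using inverse_metric_transpose transpose_eq_iff_symmetric by blast

lemma inverse_metric_mult_entry: "q \<in> U \<Longrightarrow> (\<Sum>l\<in>UNIV. Gi G q $ a $ l * G q $ l $ b) = (if a = b then 1 else 0)"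
  using metric_mult_inverse[of q] by (simp add: matrix_matrix_mult_def mat_def vec_eq_iff)

lemma inverse_metric_cramer:
  "q \<in> U \<Longrightarrow> Gi G q $ i $ j = det (\<chi> r c. if c = i then axis j 1 $ r else G q $ r $ c) / det (G q)"
proof -
  assume q: "q \<in> U"
  have "G q *v (Gi G q *v axis j 1) = axis j 1"
    using metric_mult_inverse[OF q] by (simp add: matrix_vector_mul_assoc)
  then have "Gi G q *v axis j 1 = (\<chi> k. det (\<chi> r c. if c = k then axis j 1 $ r else G q $ r $ c) / det (G q))"
    using cramer metric_invertible[OF q] invertible_det_nz by blast
  then show ?thesis by (simp add: matrix_vector_mult_basis column_def vec_eq_iff)
qed

lemma smooth_on_inverse_metric_entry: "smooth_on U (\<lambda>q. Gi G q $ i $ j)"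
proof (rule smooth_on_transform_open[OF open_U])
  have "smooth_on U (\<lambda>q. (\<chi> r c. if c = i then axis j 1 $ r else G q $ r $ c) $ r $ c)" for r c
    by (cases "c = i") (simp_all add: smooth_on_const smooth_on_metric_entry)
  then show "smooth_on U (\<lambda>q. det (\<chi> r c. if c = i then axis j 1 $ r else G q $ r $ c) / det (G q))"
    using metric_invertible invertible_det_nz
    by (intro smooth_on_divide smooth_on_det open_U) (auto simp: smooth_on_metric_entry)
qed (simp add: inverse_metric_cramer)

lemma pd_metric_sym: "q \<in> U \<Longrightarrow> pd i (\<lambda>x. G x $ a $ b) q = pd i (\<lambda>x. G x $ b $ a) q"
  by (rule pd_transform_open[OF smooth_on_imp_differentiable[OF smooth_on_metric_entry] open_U])
     (auto simp: metric_sym)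

lemma smooth_on_chr: "smooth_on U (chr G k i j)"
  unfolding chr_def
  by (intro smooth_on_mult smooth_on_const smooth_on_sum smooth_on_inverse_metric_entry smooth_on_add
      smooth_on_diff smooth_on_pd smooth_on_metric_entry open_U)

lemma chr_sym: "q \<in> U \<Longrightarrow> chr G k i j q = chr G k j i q"
  unfolding chr_def using pd_metric_sym[of q] by (simp add: algebra_simps)

lemma chr_lower_index: "q \<in> U \<Longrightarrow> (\<Sum>k\<in>UNIV. chr G k i j q * G q $ k $ l) =
   (pd i (\<lambda>x. G x $ j $ l) q + pd j (\<lambda>x. G x $ i $ l) q - pd l (\<lambda>x. G x $ i $ j) q) / 2"
proof -
  assume q: "q \<in> U"
  define B where "B m = pd i (\<lambda>x. G x $ j $ m) q + pd j (\<lambda>x. G x $ i $ m) q - pd m (\<lambda>x. G x $ i $ j) q" for m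
  have "(\<Sum>k\<in>UNIV. chr G k i j q * G q $ k $ l) = (\<Sum>k\<in>UNIV. \<Sum>m\<in>UNIV. B m / 2 * (Gi G q $ m $ k * G q $ k $ l))"
    unfolding chr_def B_def by (simp add: sum_distrib_left sum_distrib_right inverse_metric_sym[OF q] mult_ac)
  also have "\<dots> = (\<Sum>m\<in>UNIV. B m / 2 * (\<Sum>k\<in>UNIV. Gi G q $ m $ k * G q $ k $ l))"
    by (subst sum.swap) (simp add: sum_distrib_left)
  also have "\<dots> = B l / 2"
    by (simp add: inverse_metric_mult_entry[OF q] if_distrib cong: if_cong)
  finally show ?thesis unfolding B_def .
qed

lemma pd_metric_chr: "q \<in> U \<Longrightarrow> pd i (\<lambda>x. G x $ j $ k) q =
    (\<Sum>l\<in>UNIV. chr G l i j q * G q $ l $ k) + (\<Sum>l\<in>UNIV. chr G l i k q * G q $ j $ l)"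
  using chr_lower_index[of q i j k] chr_lower_index[of q i k j] pd_metric_sym[of q] metric_sym[of q]
  by simp

end

section \<open>Vector fields and the Levi-Civita connection\<close>

definition smooth_components_on :: "(real^'n::finite) set \<Rightarrow> (real^'n \<Rightarrow> real^'m::finite) \<Rightarrow> bool" where
  "smooth_components_on U F \<longleftrightarrow> (\<forall>k. smooth_on U (\<lambda>q. F q $ k))"

lemma smooth_components_onD: "smooth_components_on U F \<Longrightarrow> smooth_on U (\<lambda>q. F q $ k)"
  unfolding smooth_components_on_def by blast

lemma smooth_components_on_const: "smooth_components_on U (\<lambda>q. c)"
  unfolding smooth_components_on_def by (simp add: smooth_on_const)

lemma smooth_on_imp_smooth_components_on: "open U \<Longrightarrow> smooth_on U X \<Longrightarrow> smooth_components_on U X"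
  unfolding smooth_components_on_def using smooth_on_vec_nth by blast

lemma smooth_components_on_add:
  "open U \<Longrightarrow> smooth_components_on U A \<Longrightarrow> smooth_components_on U B \<Longrightarrow> smooth_components_on U (\<lambda>q. A q + B q)"
  unfolding smooth_components_on_def by (simp add: smooth_on_add)

lemma smooth_components_on_uminus:
  "open U \<Longrightarrow> smooth_components_on U A \<Longrightarrow> smooth_components_on U (\<lambda>q. - A q)"
  unfolding smooth_components_on_def by (simp add: smooth_on_uminus)

lemma smooth_components_on_scaleR:
  "open U \<Longrightarrow> smooth_on U f \<Longrightarrow> smooth_components_on U A \<Longrightarrow> smooth_components_on U (\<lambda>q. f q *\<^sub>R A q)"
  unfolding smooth_components_on_def by (simp add: smooth_on_mult)

definition bilin :: "('n::finite \<Rightarrow> 'n \<Rightarrow> real^'n \<Rightarrow> real) \<Rightarrow> real^'n \<Rightarrow> real^'n \<Rightarrow> real^'n \<Rightarrow> real" where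
  "bilin T q x y = (\<Sum>j\<in>UNIV. \<Sum>k\<in>UNIV. x $ j * y $ k * T j k q)"

definition cov_bilin :: "(real^'n::finite \<Rightarrow> real^'n^'n) \<Rightarrow> ('n \<Rightarrow> 'n \<Rightarrow> real^'n \<Rightarrow> real) \<Rightarrow> 'n \<Rightarrow> 'n \<Rightarrow> 'n \<Rightarrow> real^'n \<Rightarrow> real" where
  "cov_bilin G T i j k q = pd i (T j k) q - (\<Sum>l\<in>UNIV. chr G l i j q * T l k q) - (\<Sum>l\<in>UNIV. chr G l i k q * T j l q)"

definition cov_coord :: "(real^'n::finite \<Rightarrow> real^'n^'n) \<Rightarrow> 'n \<Rightarrow> (real^'n \<Rightarrow> real^'n) \<Rightarrow> real^'n \<Rightarrow> real^'n" where
  "cov_coord G i A p = (\<chi> j. pd i (\<lambda>q. A q $ j) p + (\<Sum>l\<in>UNIV. chr G j i l p * A p $ l))"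

lemma bilin_add_left: "bilin T q (x + y) z = bilin T q x z + bilin T q y z"
  unfolding bilin_def by (simp add: algebra_simps sum.distrib)

lemma bilin_add_right: "bilin T q z (x + y) = bilin T q z x + bilin T q z y"
  unfolding bilin_def by (simp add: algebra_simps sum.distrib)

lemma bilin_scaleR_left: "bilin T q (c *\<^sub>R x) z = c * bilin T q x z"
  unfolding bilin_def by (simp add: algebra_simps sum_distrib_left)

lemma bilin_scaleR_right: "bilin T q z (c *\<^sub>R x) = c * bilin T q z x"
  unfolding bilin_def by (simp add: algebra_simps sum_distrib_left)

lemma bilin_zero_left [simp]: "bilin T q 0 z = 0"
  unfolding bilin_def by simp

lemma bilin_zero_right [simp]: "bilin T q z 0 = 0"
  unfolding bilin_def by simp

lemma bilin_sum_left: "bilin T q (\<Sum>i\<in>A. x i) z = (\<Sum>i\<in>A. bilin T q (x i) z)"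
  by (induction A rule: infinite_finite_induct) (simp_all add: bilin_add_left)

lemma bilin_sum_right: "bilin T q z (\<Sum>i\<in>A. x i) = (\<Sum>i\<in>A. bilin T q z (x i))"
  by (induction A rule: infinite_finite_induct) (simp_all add: bilin_add_right)

context riemannian_chart
begin

lemma smooth_on_dirf:
  "smooth_components_on U X \<Longrightarrow> smooth_on U f \<Longrightarrow> smooth_on U (dirf X f)"
  unfolding dirf_def
  by (intro smooth_on_sum smooth_on_mult smooth_components_onD smooth_on_pd open_U)

lemma smooth_components_on_covd:
  "smooth_components_on U X \<Longrightarrow> smooth_components_on U Y \<Longrightarrow> smooth_components_on U (covd G X Y)"
  unfolding smooth_components_on_def covd_def
  by (simp, intro allI smooth_on_add smooth_on_sum smooth_on_mult smooth_on_dirf smooth_on_chr open_U)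
     (auto simp: smooth_components_on_def)

lemma smooth_components_on_lie:
  "smooth_components_on U X \<Longrightarrow> smooth_components_on U Y \<Longrightarrow> smooth_components_on U (lie X Y)"
  unfolding smooth_components_on_def lie_def
  by (simp, intro allI smooth_on_diff smooth_on_dirf open_U) (auto simp: smooth_components_on_def)

lemma smooth_on_bilin:
  "(\<And>j k. smooth_on U (T j k)) \<Longrightarrow> smooth_components_on U A \<Longrightarrow> smooth_components_on U B \<Longrightarrow>
   smooth_on U (\<lambda>q. bilin T q (A q) (B q))"
  unfolding bilin_def by (intro smooth_on_sum smooth_on_mult smooth_components_onD open_U)

lemma dirf_add:
  "smooth_on U f \<Longrightarrow> smooth_on U g \<Longrightarrow> p \<in> U \<Longrightarrow> dirf X (\<lambda>q. f q + g q) p = dirf X f p + dirf X g p"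
  unfolding dirf_def by (simp add: pd_add smooth_on_imp_differentiable algebra_simps sum.distrib)

lemma dirf_diff:
  "smooth_on U f \<Longrightarrow> smooth_on U g \<Longrightarrow> p \<in> U \<Longrightarrow> dirf X (\<lambda>q. f q - g q) p = dirf X f p - dirf X g p"
  unfolding dirf_def by (simp add: pd_diff smooth_on_imp_differentiable algebra_simps sum_subtractf)

lemma dirf_mult:
  "smooth_on U f \<Longrightarrow> smooth_on U g \<Longrightarrow> p \<in> U \<Longrightarrow> dirf X (\<lambda>q. f q * g q) p = dirf X f p * g p + f p * dirf X g p"
  unfolding dirf_def
  by (simp add: pd_mult smooth_on_imp_differentiable algebra_simps sum.distrib sum_distrib_left sum_distrib_right)

lemma dirf_transform:
  "smooth_on U f \<Longrightarrow> p \<in> U \<Longrightarrow> (\<And>q. q \<in> U \<Longrightarrow> f q = g q) \<Longrightarrow> dirf X f p = dirf X g p"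
proof -
  assume f: "smooth_on U f" and p: "p \<in> U" and fg: "\<And>q. q \<in> U \<Longrightarrow> f q = g q"
  have "pd i f p = pd i g p" for i
    using pd_transform_open[OF smooth_on_imp_differentiable[OF f p] open_U p] fg by blast
  then show ?thesis unfolding dirf_def by simp
qed

lemma covd_add:
  "smooth_components_on U A \<Longrightarrow> smooth_components_on U B \<Longrightarrow> p \<in> U \<Longrightarrow>
   covd G X (\<lambda>q. A q + B q) p = covd G X A p + covd G X B p"
  unfolding covd_def by (simp add: vec_eq_iff dirf_add smooth_components_onD algebra_simps sum.distrib)

lemma covd_scaleR:
  "smooth_on U f \<Longrightarrow> smooth_components_on U A \<Longrightarrow> p \<in> U \<Longrightarrow>
   covd G X (\<lambda>q. f q *\<^sub>R A q) p = dirf X f p *\<^sub>R A p + f p *\<^sub>R covd G X A p"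
  unfolding covd_def by (simp add: vec_eq_iff dirf_mult smooth_components_onD algebra_simps sum_distrib_left)

lemma covd_transform:
  "smooth_components_on U A \<Longrightarrow> p \<in> U \<Longrightarrow> (\<And>q. q \<in> U \<Longrightarrow> A q = B q) \<Longrightarrow> covd G X A p = covd G X B p"
proof -
  assume A: "smooth_components_on U A" and p: "p \<in> U" and AB: "\<And>q. q \<in> U \<Longrightarrow> A q = B q"
  have "dirf X (\<lambda>q. A q $ k) p = dirf X (\<lambda>q. B q $ k) p" for k
    using dirf_transform[OF smooth_components_onD[OF A] p] AB by simp
  then show ?thesis unfolding covd_def using AB[OF p] by simp
qed

lemma dirf_commutator:
  assumes X: "smooth_components_on U X" and Z: "smooth_components_on U Z"
    and f: "smooth_on U f" and p: "p \<in> U"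
  shows "dirf X (dirf Z f) p - dirf Z (dirf X f) p = dirf (lie X Z) f p"
proof -
  have second: "pd i (dirf W f) p = (\<Sum>j\<in>UNIV. pd i (\<lambda>q. W q $ j) p * pd j f p + W p $ j * pd i (pd j f) p)"
    if W: "smooth_components_on U W" for W i
    unfolding dirf_def
    using smooth_on_imp_differentiable[OF smooth_components_onD[OF W] p]
      smooth_on_imp_differentiable[OF smooth_on_pd[OF f] p]
    by (subst pd_sum) (auto simp: pd_mult differentiable_mult)
  have "dirf X (dirf Z f) p = (\<Sum>i\<in>UNIV. \<Sum>j\<in>UNIV. X p $ i * pd i (\<lambda>q. Z q $ j) p * pd j f p)
        + (\<Sum>i\<in>UNIV. \<Sum>j\<in>UNIV. X p $ i * Z p $ j * pd i (pd j f) p)"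
    unfolding dirf_def[of X] using second[OF Z] by (simp add: sum_distrib_left sum.distrib algebra_simps)
  moreover have "dirf Z (dirf X f) p = (\<Sum>i\<in>UNIV. \<Sum>j\<in>UNIV. Z p $ i * pd i (\<lambda>q. X q $ j) p * pd j f p)
        + (\<Sum>i\<in>UNIV. \<Sum>j\<in>UNIV. X p $ i * Z p $ j * pd i (pd j f) p)"
  proof -
    have "(\<Sum>i\<in>UNIV. \<Sum>j\<in>UNIV. Z p $ i * X p $ j * pd i (pd j f) p)
        = (\<Sum>i\<in>UNIV. \<Sum>j\<in>UNIV. X p $ i * Z p $ j * pd i (pd j f) p)"
      by (subst sum.swap) (simp add: pd_commute[OF open_U f p] mult_ac)
    then show ?thesis
      unfolding dirf_def[of Z] using second[OF X] by (simp add: sum_distrib_left sum.distrib algebra_simps)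
  qed
  moreover have "dirf (lie X Z) f p = (\<Sum>i\<in>UNIV. \<Sum>j\<in>UNIV. X p $ i * pd i (\<lambda>q. Z q $ j) p * pd j f p)
       - (\<Sum>i\<in>UNIV. \<Sum>j\<in>UNIV. Z p $ i * pd i (\<lambda>q. X q $ j) p * pd j f p)"
    unfolding dirf_def lie_def
    by (simp add: sum_distrib_left sum_distrib_right sum_subtractf algebra_simps) (subst (1 2) sum.swap, simp)
  ultimately show ?thesis by simp
qed

lemma lie_eq_covd_diff: "p \<in> U \<Longrightarrow> lie X Y p = covd G X Y p - covd G Y X p"
proof -
  assume p: "p \<in> U"
  have "(\<Sum>i\<in>UNIV. \<Sum>j\<in>UNIV. chr G k i j p * Y p $ i * X p $ j) = (\<Sum>i\<in>UNIV. \<Sum>j\<in>UNIV. chr G k i j p * X p $ i * Y p $ j)" for k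
    by (subst sum.swap) (simp add: chr_sym[OF p] mult_ac)
  then show ?thesis unfolding covd_def lie_def by (simp add: vec_eq_iff)
qed

lemma pd_bilin:
  assumes A: "smooth_components_on U A" and B: "smooth_components_on U B"
    and T: "\<And>j k. smooth_on U (T j k)" and p: "p \<in> U"
  shows "pd i (\<lambda>q. bilin T q (A q) (B q)) p = (\<Sum>j\<in>UNIV. \<Sum>k\<in>UNIV. A p $ j * B p $ k * cov_bilin G T i j k p)
     + bilin T p (cov_coord G i A p) (B p) + bilin T p (A p) (cov_coord G i B p)"
proof -
  have dA: "\<And>j. (\<lambda>q. A q $ j) differentiable (at p)"
    and dB: "\<And>j. (\<lambda>q. B q $ j) differentiable (at p)"
    and dT: "\<And>j k. T j k differentiable (at p)"
    using smooth_on_imp_differentiable[OF smooth_components_onD p] A B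
      smooth_on_imp_differentiable[OF T p] by blast+
  have product_rule: "pd i (\<lambda>q. bilin T q (A q) (B q)) p = (\<Sum>j\<in>UNIV. \<Sum>k\<in>UNIV.
     pd i (\<lambda>q. A q $ j) p * B p $ k * T j k p + A p $ j * pd i (\<lambda>q. B q $ k) p * T j k p
     + A p $ j * B p $ k * pd i (T j k) p)"
    unfolding bilin_def
    by (subst pd_sum, simp add: differentiable_sum differentiable_mult dA dB dT,
        rule sum.cong[OF refl], subst pd_sum, simp add: differentiable_mult dA dB dT)
       (simp add: pd_mult differentiable_mult dA dB dT algebra_simps)
  have "(\<Sum>j\<in>UNIV. \<Sum>k\<in>UNIV. \<Sum>l\<in>UNIV. chr G j i l p * A p $ l * B p $ k * T j k p)
     = (\<Sum>l\<in>UNIV. \<Sum>k\<in>UNIV. \<Sum>j\<in>UNIV. chr G j i l p * A p $ l * B p $ k * T j k p)"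
    by (subst sum.swap, subst (2) sum.swap, subst sum.swap) (rule refl)
  moreover have "(\<Sum>j\<in>UNIV. \<Sum>k\<in>UNIV. \<Sum>l\<in>UNIV. chr G k i l p * A p $ j * B p $ l * T j k p)
     = (\<Sum>j\<in>UNIV. \<Sum>l\<in>UNIV. \<Sum>k\<in>UNIV. chr G k i l p * A p $ j * B p $ l * T j k p)"
    by (rule sum.cong[OF refl], rule sum.swap)
  ultimately show ?thesis using product_rule
    by (simp add: cov_bilin_def cov_coord_def bilin_def algebra_simps sum.distrib sum_subtractf
        sum_distrib_left sum_distrib_right)
qed

lemma covd_eq_sum_cov_coord: "covd G X A p = (\<Sum>i\<in>UNIV. X p $ i *\<^sub>R cov_coord G i A p)"
  unfolding covd_def cov_coord_def dirf_def
  by (simp add: vec_eq_iff sum_component algebra_simps sum.distrib sum_distrib_left)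

lemma dirf_bilin:
  assumes X: "smooth_components_on U X" and A: "smooth_components_on U A" and B: "smooth_components_on U B"
    and T: "\<And>j k. smooth_on U (T j k)" and p: "p \<in> U"
  shows "dirf X (\<lambda>q. bilin T q (A q) (B q)) p =
     (\<Sum>i\<in>UNIV. \<Sum>j\<in>UNIV. \<Sum>k\<in>UNIV. X p $ i * A p $ j * B p $ k * cov_bilin G T i j k p)
     + bilin T p (covd G X A p) (B p) + bilin T p (A p) (covd G X B p)"
  unfolding dirf_def pd_bilin[OF A B T p] covd_eq_sum_cov_coord
    bilin_sum_left bilin_sum_right bilin_scaleR_left bilin_scaleR_right
  by (simp add: algebra_simps sum.distrib sum_distrib_left)

end

context riemannian_chart
begin

lemma gm_eq_bilin: "gm G q x y = bilin (\<lambda>j k q. G q $ j $ k) q x y"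
  unfolding gm_def bilin_def
  by (simp add: inner_vec_def matrix_vector_mult_def sum_distrib_left mult_ac)

lemma cov_bilin_metric: "p \<in> U \<Longrightarrow> cov_bilin G (\<lambda>j k q. G q $ j $ k) i j k p = 0"
  unfolding cov_bilin_def using pd_metric_chr[of p i j k] by (simp add: metric_sym)

lemma smooth_on_gm:
  "smooth_components_on U A \<Longrightarrow> smooth_components_on U B \<Longrightarrow> smooth_on U (\<lambda>q. gm G q (A q) (B q))"
  unfolding gm_eq_bilin using smooth_on_bilin[OF smooth_on_metric_entry] .

lemma dirf_gm:
  assumes "smooth_components_on U X" "smooth_components_on U A" "smooth_components_on U B" "p \<in> U"
  shows "dirf X (\<lambda>q. gm G q (A q) (B q)) p = gm G p (covd G X A p) (B p) + gm G p (A p) (covd G X B p)"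
  unfolding gm_eq_bilin using dirf_bilin[OF assms(1-3) smooth_on_metric_entry assms(4)]
  by (simp add: cov_bilin_metric[OF assms(4)])

lemma gm_sym: "q \<in> U \<Longrightarrow> gm G q x y = gm G q y x"
  unfolding gm_eq_bilin bilin_def by (subst sum.swap) (simp add: metric_sym mult_ac)

lemma gm_add_left: "gm G q (x + y) z = gm G q x z + gm G q y z"
  unfolding gm_eq_bilin by (rule bilin_add_left)

lemma gm_add_right: "gm G q z (x + y) = gm G q z x + gm G q z y"
  unfolding gm_eq_bilin by (rule bilin_add_right)

lemma gm_scaleR_left: "gm G q (c *\<^sub>R x) z = c * gm G q x z"
  unfolding gm_eq_bilin by (rule bilin_scaleR_left)

lemma gm_scaleR_right: "gm G q z (c *\<^sub>R x) = c * gm G q z x"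
  unfolding gm_eq_bilin by (rule bilin_scaleR_right)

lemma gm_diff_left: "gm G q (x - y) z = gm G q x z - gm G q y z"
  using gm_add_left[of q x "- y" z] gm_scaleR_left[of q "- 1" y z] by simp

lemma gm_diff_right: "gm G q z (x - y) = gm G q z x - gm G q z y"
  using gm_add_right[of q z x "- y"] gm_scaleR_right[of q z "- 1" y] by simp

lemma gm_uminus_left: "gm G q (- x) z = - gm G q x z"
  using gm_scaleR_left[of q "- 1" x z] by simp

lemma gm_uminus_right: "gm G q z (- x) = - gm G q z x"
  using gm_scaleR_right[of q z "- 1" x] by simp

lemma gm_zero_left: "gm G q 0 z = 0"
  unfolding gm_def by simp

lemmas gm_linear = gm_zero_left gm_add_left gm_add_right gm_scaleR_left gm_scaleR_right
  gm_diff_left gm_diff_right gm_uminus_left gm_uminus_right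

lemma gm_eq_sum_axis: "gm G q x y = (\<Sum>b\<in>UNIV. y $ b * gm G q x (axis b 1))"
  unfolding gm_eq_bilin bilin_def
  by (simp add: axis_def if_distrib if_distribR sum_distrib_left mult_ac cong: if_cong)
     (rule sum.swap)

lemma gm_axis_eq_imp_eq:
  assumes "p \<in> U" "\<And>b. gm G p x (axis b 1) = gm G p y (axis b 1)"
  shows "x = y"
proof (rule ccontr)
  assume "x \<noteq> y"
  then have "gm G p (x - y) (x - y) > 0" using metric_pos[OF assms(1)] unfolding gm_def by simp
  moreover have "gm G p (x - y) (x - y) = 0"
    using assms(2) by (subst gm_eq_sum_axis) (simp add: gm_linear)
  ultimately show False by simp
qed

lemma gm_inverse_metric: "q \<in> U \<Longrightarrow> gm G q (Gi G q *v c) y = c \<bullet> y"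
  unfolding gm_def matrix_vector_mult_inner
  by (simp add: inverse_metric_transpose matrix_vector_mul_assoc metric_mult_inverse)

lemma gm_sharp: "q \<in> U \<Longrightarrow> gm G q (sharp G q f) (axis b 1) = f (axis b 1)"
  unfolding sharp_def by (simp add: gm_inverse_metric inner_axis)

lemma inverse_metric_inner_sym: "q \<in> U \<Longrightarrow> x \<bullet> (Gi G q *v y) = y \<bullet> (Gi G q *v x)"
  by (metis inverse_metric_transpose inner_commute matrix_vector_mult_inner)

end

section \<open>Curvature\<close>

text \<open>The pair symmetry follows from the two skew symmetries and the first Bianchi identity by
  adding the Bianchi identities for the four cyclic arrangements of the arguments.\<close>
lemma pair_sym_from_bianchi:
  fixes R :: "'a \<Rightarrow> 'a \<Rightarrow> 'a \<Rightarrow> 'a \<Rightarrow> real"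
  assumes skew12: "\<And>i a j b. R i a j b = - R a i j b"
    and skew34: "\<And>i a j b. R i a j b = - R i a b j"
    and bianchi: "\<And>i a j b. R i a j b + R a j i b + R j i a b = 0"
  shows "R x z y w = R y w x z"
  using bianchi[of x z y w] bianchi[of z y w x] bianchi[of y w x z] bianchi[of w x z y]
    skew34[of z y x w] skew34[of w x y z] skew34[of x z y w] skew34[of y w x z]
    skew12[of x y w z] skew34[of y x z w] skew12[of z w x y] skew34[of w z y x]
  by linarith

context riemannian_chart
begin

lemma covd_zero_direction: "X p = 0 \<Longrightarrow> covd G X Y p = 0"
  by (simp add: covd_def dirf_def vec_eq_iff)

lemma covd_uminus_direction: "X' p = - X p \<Longrightarrow> covd G X' Y p = - covd G X Y p"
  by (simp add: covd_def dirf_def vec_eq_iff sum_negf)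

lemma lie_anticomm: "lie Z X p = - lie X Z p"
  by (simp add: lie_def vec_eq_iff)

lemma lie_const: "lie (\<lambda>q. a) (\<lambda>q. b) p = 0"
  by (simp add: lie_def dirf_def vec_eq_iff)

lemma rmvec_antisym: "rmvec G X Z Y p = - rmvec G Z X Y p"
  unfolding rmvec_def using covd_uminus_direction[of "lie Z X" p "lie X Z" Y, OF lie_anticomm] by simp

lemma smooth_components_on_rmvec:
  "smooth_components_on U X \<Longrightarrow> smooth_components_on U Z \<Longrightarrow> smooth_components_on U Y \<Longrightarrow>
   smooth_components_on U (rmvec G X Z Y)"
  unfolding rmvec_def[abs_def]
  by (intro smooth_components_on_add smooth_components_on_uminus smooth_components_on_covd
      smooth_components_on_lie open_U)

text \<open>Skew symmetry of \<open>g(R(X,Z)Y,W)\<close> in Y and W: apply the commutator identity for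
  directional derivatives to \<open>g(Y,W)\<close> and expand with metric compatibility.\<close>
lemma gm_rmvec_skew:
  assumes X: "smooth_components_on U X" and Z: "smooth_components_on U Z"
    and Y: "smooth_components_on U Y" and W: "smooth_components_on U W" and p: "p \<in> U"
  shows "gm G p (rmvec G X Z Y p) (W p) + gm G p (Y p) (rmvec G X Z W p) = 0"
proof -
  define g where "g = (\<lambda>q. gm G q (Y q) (W q))"
  have g: "smooth_on U g" unfolding g_def by (rule smooth_on_gm[OF Y W])
  have second: "dirf A (dirf B g) p = gm G p (covd G A (covd G B Y) p) (W p) + gm G p (covd G B Y p) (covd G A W p)
     + gm G p (covd G A Y p) (covd G B W p) + gm G p (Y p) (covd G A (covd G B W) p)"
    if A: "smooth_components_on U A" and B: "smooth_components_on U B" for A B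
  proof -
    have "dirf A (dirf B g) p = dirf A (\<lambda>q. gm G q (covd G B Y q) (W q) + gm G q (Y q) (covd G B W q)) p"
      by (rule dirf_transform[OF smooth_on_dirf[OF B g] p]) (simp add: g_def dirf_gm[OF B Y W])
    also have "\<dots> = dirf A (\<lambda>q. gm G q (covd G B Y q) (W q)) p + dirf A (\<lambda>q. gm G q (Y q) (covd G B W q)) p"
      by (rule dirf_add[OF smooth_on_gm smooth_on_gm p]) (auto intro: smooth_components_on_covd B Y W)
    finally show ?thesis
      using dirf_gm[OF A smooth_components_on_covd[OF B Y] W p] dirf_gm[OF A Y smooth_components_on_covd[OF B W] p]
      by simp
  qed
  show ?thesis
    using dirf_commutator[OF X Z g p] second[OF X Z] second[OF Z X]
      dirf_gm[OF smooth_components_on_lie[OF X Z] Y W p]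
    unfolding rmvec_def g_def by (simp add: gm_linear)
qed

lemma rmvec_first_bianchi_const:
  assumes p: "p \<in> U"
  shows "rmvec G (\<lambda>q. a) (\<lambda>q. b) (\<lambda>q. c) p + rmvec G (\<lambda>q. b) (\<lambda>q. c) (\<lambda>q. a) p
       + rmvec G (\<lambda>q. c) (\<lambda>q. a) (\<lambda>q. b) p = 0"
proof -
  have swap: "covd G (\<lambda>q. x) (covd G (\<lambda>q. y) (\<lambda>q. z)) p = covd G (\<lambda>q. x) (covd G (\<lambda>q. z) (\<lambda>q. y)) p" for x y z
  proof (rule covd_transform[OF smooth_components_on_covd[OF smooth_components_on_const smooth_components_on_const] p])
    fix q assume "q \<in> U"
    then show "covd G (\<lambda>q. y) (\<lambda>q. z) q = covd G (\<lambda>q. z) (\<lambda>q. y) q"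
      using lie_eq_covd_diff[of q "\<lambda>q. y" "\<lambda>q. z"] lie_const[of y z q] by simp
  qed
  show ?thesis unfolding rmvec_def
    using swap[of a b c] swap[of b c a] swap[of c a b] by (simp add: covd_zero_direction lie_const)
qed

definition Rm_axis :: "real^'n \<Rightarrow> 'n \<Rightarrow> 'n \<Rightarrow> 'n \<Rightarrow> 'n \<Rightarrow> real" where
  "Rm_axis p i a j b = Rm G (\<lambda>q. axis i 1) (\<lambda>q. axis a 1) (\<lambda>q. axis j 1) p (axis b 1)"

lemma Rm_axis_pair_sym: "p \<in> U \<Longrightarrow> Rm_axis p i a j b = Rm_axis p j b i a"
proof (rule pair_sym_from_bianchi[where R = "Rm_axis p"])
  assume p: "p \<in> U"
  show "Rm_axis p i a j b = - Rm_axis p a i j b" for i a j b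
    unfolding Rm_axis_def Rm_def using rmvec_antisym[of "\<lambda>q. axis i 1" "\<lambda>q. axis a 1"] by (simp add: gm_linear)
  show "Rm_axis p i a j b = - Rm_axis p i a b j" for i a j b
    unfolding Rm_axis_def Rm_def
    using gm_rmvec_skew[OF smooth_components_on_const smooth_components_on_const smooth_components_on_const
        smooth_components_on_const p, of "axis i 1" "axis a 1" "axis j 1" "axis b 1"]
      gm_sym[OF p, of "axis j 1"] by simp
  show "Rm_axis p i a j b + Rm_axis p a j i b + Rm_axis p j i a b = 0" for i a j b
    unfolding Rm_axis_def Rm_def
    using arg_cong[OF rmvec_first_bianchi_const[OF p, of "axis i 1" "axis a 1" "axis j 1"],
        of "\<lambda>v. gm G p v (axis b 1)"]
    by (simp add: gm_linear)
qed

lemma Ric_sym: "p \<in> U \<Longrightarrow> Ric G a b p = Ric G b a p"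
proof -
  assume p: "p \<in> U"
  have "Ric G b a p = (\<Sum>i\<in>UNIV. \<Sum>j\<in>UNIV. Gi G p $ i $ j * Rm_axis p j a i b)"
    unfolding Ric_def Rm_axis_def[symmetric] by (simp add: Rm_axis_pair_sym[OF p, of _ b _ a])
  also have "\<dots> = (\<Sum>j\<in>UNIV. \<Sum>i\<in>UNIV. Gi G p $ i $ j * Rm_axis p j a i b)"
    by (rule sum.swap)
  also have "\<dots> = Ric G a b p"
    unfolding Ric_def Rm_axis_def[symmetric] using inverse_metric_sym[OF p] by simp
  finally show ?thesis by simp
qed

lemma hess_sym: "smooth_on U f \<Longrightarrow> p \<in> U \<Longrightarrow> hess G f a b p = hess G f b a p"
  unfolding hess_def using pd_commute[OF open_U] chr_sym by simp

lemma smooth_on_Ric: "smooth_on U (Ric G a b)"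
  unfolding Ric_def[abs_def] Rm_def
  by (intro smooth_on_sum smooth_on_mult smooth_on_inverse_metric_entry smooth_on_gm
      smooth_components_on_rmvec smooth_components_on_const open_U)

lemma smooth_on_scal: "smooth_on U (scal G)"
  unfolding scal_def[abs_def]
  by (intro smooth_on_sum smooth_on_mult smooth_on_inverse_metric_entry smooth_on_Ric open_U)

lemma smooth_on_hess: "smooth_on U f \<Longrightarrow> smooth_on U (hess G f a b)"
  unfolding hess_def[abs_def]
  by (intro smooth_on_diff smooth_on_sum smooth_on_mult smooth_on_pd smooth_on_chr open_U)

lemma smooth_on_lap: "smooth_on U f \<Longrightarrow> smooth_on U (lap G f)"
  unfolding lap_def[abs_def]
  by (intro smooth_on_sum smooth_on_mult smooth_on_inverse_metric_entry smooth_on_hess open_U)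

lemma smooth_on_gradsq: "smooth_on U f \<Longrightarrow> smooth_on U (gradsq G f)"
  unfolding gradsq_def[abs_def]
  by (intro smooth_on_sum smooth_on_mult smooth_on_inverse_metric_entry smooth_on_pd open_U)

end

section \<open>The weighted Schouten tensor\<close>

locale scms_chart = riemannian_chart U G for U :: "(real^'n::finite) set" and G +
  fixes v :: "real^'n \<Rightarrow> real" and m mu :: real
  assumes smooth_v: "smooth_on U v" and v_pos: "\<forall>q\<in>U. v q > 0"
begin

lemma smooth_on_Ricm: "smooth_on U (Ricm G v m a b)"
  unfolding Ricm_def[abs_def] using v_pos
  by (intro smooth_on_diff smooth_on_mult smooth_on_divide smooth_on_const smooth_v smooth_on_Ric
      smooth_on_hess open_U) auto

lemma smooth_on_Rscm: "smooth_on U (Rscm G v m)"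
  unfolding Rscm_def[abs_def] using v_pos
  by (intro smooth_on_diff smooth_on_mult smooth_on_divide smooth_on_const smooth_v smooth_on_scal
      smooth_on_lap smooth_on_gradsq smooth_on_power open_U) auto

lemma smooth_on_JW: "smooth_on U (JW G v m mu)"
  unfolding JW_def[abs_def] using v_pos
  by (intro smooth_on_divide_const smooth_on_divide smooth_on_add smooth_on_Rscm smooth_on_power
      smooth_v smooth_on_const open_U) auto

lemma smooth_on_PWc: "smooth_on U (PWc G v m mu a b)"
  unfolding PWc_def[abs_def]
  by (intro smooth_on_divide_const smooth_on_diff smooth_on_mult smooth_on_Ricm smooth_on_JW
      smooth_on_metric_entry smooth_on_const open_U)

lemma PWc_sym: "p \<in> U \<Longrightarrow> PWc G v m mu a b p = PWc G v m mu b a p"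
  unfolding PWc_def Ricm_def using Ric_sym hess_sym[OF smooth_v] metric_sym by simp

lemma PW_eq_bilin: "PW G v m mu q x y = bilin (PWc G v m mu) q x y"
  unfolding PW_def bilin_def by simp

lemma PW_sym: "q \<in> U \<Longrightarrow> PW G v m mu q x y = PW G v m mu q y x"
  unfolding PW_def by (subst sum.swap) (simp add: PWc_sym mult_ac)

lemma smooth_on_PW:
  "smooth_components_on U A \<Longrightarrow> smooth_components_on U B \<Longrightarrow> smooth_on U (\<lambda>q. PW G v m mu q (A q) (B q))"
  unfolding PW_eq_bilin by (rule smooth_on_bilin[OF smooth_on_PWc])

definition PW_covec :: "real^'n \<Rightarrow> real^'n \<Rightarrow> real^'n" where
  "PW_covec q x = (\<chi> b. PW G v m mu q x (axis b 1))"

lemma PW_eq_inner: "PW G v m mu q x y = PW_covec q x \<bullet> y"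
  unfolding PW_covec_def PW_def inner_vec_def
  by (simp add: axis_def if_distrib if_distribR sum_distrib_left sum_distrib_right mult_ac cong: if_cong)
     (rule sum.swap)

lemma PWvec_eq: "PWvec G v m mu q x = Gi G q *v PW_covec q x"
  unfolding PWvec_def sharp_def PW_covec_def ..

lemma gm_PWvec: "q \<in> U \<Longrightarrow> gm G q (PWvec G v m mu q x) y = PW G v m mu q x y"
  unfolding PWvec_eq by (simp add: gm_inverse_metric PW_eq_inner)

lemma PW_PWvec_sym: "q \<in> U \<Longrightarrow> PW G v m mu q x (PWvec G v m mu q z) = PW G v m mu q z (PWvec G v m mu q x)"
  unfolding PWvec_eq PW_eq_inner using inverse_metric_inner_sym by blast

lemma smooth_components_on_PWvec:
  "smooth_components_on U Z \<Longrightarrow> smooth_components_on U (\<lambda>q. PWvec G v m mu q (Z q))"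
  unfolding smooth_components_on_def PWvec_eq PW_covec_def matrix_vector_mult_def PW_eq_bilin
  by (simp, intro allI smooth_on_sum smooth_on_mult smooth_on_inverse_metric_entry smooth_on_bilin
      smooth_on_PWc smooth_components_on_const open_U) (simp add: smooth_components_on_def)

lemma PW_linear_left:
  "PW G v m mu q (x + y) z = PW G v m mu q x z + PW G v m mu q y z"
  "PW G v m mu q (c *\<^sub>R x) z = c * PW G v m mu q x z"
  "PW G v m mu q (x - y) z = PW G v m mu q x z - PW G v m mu q y z"
  unfolding PW_eq_inner PW_covec_def PW_def
  by (simp_all add: inner_vec_def algebra_simps sum.distrib sum_distrib_left sum_subtractf)

lemma PW_linear_right:
  "PW G v m mu q z (x + y) = PW G v m mu q z x + PW G v m mu q z y"
  "PW G v m mu q z (c *\<^sub>R x) = c * PW G v m mu q z x"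
  "PW G v m mu q z (x - y) = PW G v m mu q z x - PW G v m mu q z y"
  unfolding PW_eq_inner by (simp_all add: inner_add_right inner_diff_right)

end

section \<open>Curvature of the W-tractor connection\<close>

lemma tractor_components [simp]:
  "ttop (tadd I J) p = ttop I p + ttop J p" "tmid (tadd I J) p = tmid I p + tmid J p"
  "tbot (tadd I J) p = tbot I p + tbot J p"
  "ttop (tneg I) p = - ttop I p" "tmid (tneg I) p = - tmid I p" "tbot (tneg I) p = - tbot I p"
  unfolding tadd_def tneg_def ttop_def tmid_def tbot_def by simp_all

locale tractor_at = scms_chart U G v m mu for U :: "(real^'n::finite) set" and G v m mu +
  fixes sigma rho :: "real^'n \<Rightarrow> real" and omega :: "real^'n \<Rightarrow> real^'n" and p :: "real^'n"
  assumes smooth_sigma: "smooth_on U sigma" and smooth_rho: "smooth_on U rho"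
    and smooth_omega: "smooth_components_on U omega" and p: "p \<in> U"
begin

definition cov_PW :: "real^'n \<Rightarrow> real^'n \<Rightarrow> real^'n \<Rightarrow> real" where
  "cov_PW x z w = (\<Sum>i\<in>UNIV. \<Sum>j\<in>UNIV. \<Sum>k\<in>UNIV. x $ i * z $ j * w $ k * cov_bilin G (PWc G v m mu) i j k p)"

lemma dPW_eq_cov_PW: "dPW G v m mu p x z w = cov_PW x z w - cov_PW z x w"
proof -
  have "cov_PW z x w = (\<Sum>j\<in>UNIV. \<Sum>i\<in>UNIV. \<Sum>k\<in>UNIV. x $ i * z $ j * w $ k * cov_bilin G (PWc G v m mu) j i k p)"
    unfolding cov_PW_def by (simp add: mult_ac)
  also have "\<dots> = (\<Sum>i\<in>UNIV. \<Sum>j\<in>UNIV. \<Sum>k\<in>UNIV. x $ i * z $ j * w $ k * cov_bilin G (PWc G v m mu) j i k p)"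
    by (rule sum.swap)
  finally show ?thesis
    unfolding dPW_def cov_PW_def covPWc_def cov_bilin_def[symmetric]
    by (simp add: right_diff_distrib sum_subtractf)
qed

lemma dirf_PW:
  "smooth_components_on U X \<Longrightarrow> smooth_components_on U A \<Longrightarrow> smooth_components_on U B \<Longrightarrow>
   dirf X (\<lambda>q. PW G v m mu q (A q) (B q)) p
     = cov_PW (X p) (A p) (B p) + PW G v m mu p (covd G X A p) (B p) + PW G v m mu p (A p) (covd G X B p)"
  unfolding PW_eq_bilin cov_PW_def using dirf_bilin[OF _ _ _ smooth_on_PWc p] by simp

lemma gm_covd_PWvec:
  assumes X: "smooth_components_on U X" and Z: "smooth_components_on U Z"
  shows "gm G p (covd G X (\<lambda>q. PWvec G v m mu q (Z q)) p) (axis b 1)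
    = cov_PW (X p) (Z p) (axis b 1) + PW G v m mu p (covd G X Z p) (axis b 1)"
proof -
  have "dirf X (\<lambda>q. gm G q (PWvec G v m mu q (Z q)) (axis b 1)) p = dirf X (\<lambda>q. PW G v m mu q (Z q) (axis b 1)) p"
    by (rule dirf_transform[OF smooth_on_gm[OF smooth_components_on_PWvec[OF Z] smooth_components_on_const] p])
       (simp add: gm_PWvec)
  then show ?thesis
    using dirf_gm[OF X smooth_components_on_PWvec[OF Z] smooth_components_on_const p]
      dirf_PW[OF X Z smooth_components_on_const] gm_PWvec[OF p]
    by (simp add: covd_def dirf_def)
qed

lemma top_nablaW_nablaW:
  assumes A: "smooth_components_on U A" and B: "smooth_components_on U B"
  shows "ttop (nablaW G v m mu A (nablaW G v m mu B (sigma, omega, rho))) p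
    = dirf A (dirf B sigma) p - gm G p (covd G A omega p) (B p) - gm G p (omega p) (covd G A B p)
      - gm G p (covd G B omega p) (A p) - sigma p * PW G v m mu p (B p) (A p) - rho p * gm G p (B p) (A p)"
  unfolding nablaW_def ttop_def tmid_def tbot_def
  using dirf_diff[OF smooth_on_dirf[OF B smooth_sigma] smooth_on_gm[OF smooth_omega B] p]
    dirf_gm[OF A smooth_omega B p]
  by (simp add: gm_linear gm_PWvec[OF p])

lemma top_nablaW: "ttop (nablaW G v m mu A (sigma, omega, rho)) p = dirf A sigma p - gm G p (omega p) (A p)"
  unfolding nablaW_def ttop_def tmid_def tbot_def by simp

lemma bot_nablaW_nablaW:
  assumes A: "smooth_components_on U A" and B: "smooth_components_on U B"
  shows "tbot (nablaW G v m mu A (nablaW G v m mu B (sigma, omega, rho))) p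
    = dirf A (dirf B rho) p
      - (cov_PW (A p) (B p) (omega p) + PW G v m mu p (covd G A B p) (omega p) + PW G v m mu p (B p) (covd G A omega p))
      - PW G v m mu p (A p) (covd G B omega p) - sigma p * PW G v m mu p (A p) (PWvec G v m mu p (B p))
      - rho p * PW G v m mu p (A p) (B p)"
  unfolding nablaW_def ttop_def tmid_def tbot_def
  using dirf_diff[OF smooth_on_dirf[OF B smooth_rho] smooth_on_PW[OF B smooth_omega] p]
    dirf_PW[OF A B smooth_omega]
  by (simp add: PW_linear_right)

lemma bot_nablaW: "tbot (nablaW G v m mu A (sigma, omega, rho)) p = dirf A rho p - PW G v m mu p (A p) (omega p)"
  unfolding nablaW_def ttop_def tmid_def tbot_def by simp

lemma gm_mid_nablaW_nablaW:
  assumes A: "smooth_components_on U A" and B: "smooth_components_on U B"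
  shows "gm G p (tmid (nablaW G v m mu A (nablaW G v m mu B (sigma, omega, rho))) p) (axis b 1)
    = gm G p (covd G A (covd G B omega) p) (axis b 1) + dirf A sigma p * PW G v m mu p (B p) (axis b 1)
      + sigma p * (cov_PW (A p) (B p) (axis b 1) + PW G v m mu p (covd G A B p) (axis b 1))
      + dirf A rho p * gm G p (B p) (axis b 1) + rho p * gm G p (covd G A B p) (axis b 1)
      + (dirf B sigma p - gm G p (omega p) (B p)) * PW G v m mu p (A p) (axis b 1)
      + (dirf B rho p - PW G v m mu p (B p) (omega p)) * gm G p (A p) (axis b 1)"
proof -
  note smooth = smooth_components_on_covd[OF B smooth_omega]
    smooth_components_on_scaleR[OF open_U smooth_sigma smooth_components_on_PWvec[OF B]]
    smooth_components_on_scaleR[OF open_U smooth_rho B]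
  have "covd G A (\<lambda>q. covd G B omega q + sigma q *\<^sub>R PWvec G v m mu q (B q) + rho q *\<^sub>R B q) p
      = covd G A (covd G B omega) p
        + (dirf A sigma p *\<^sub>R PWvec G v m mu p (B p) + sigma p *\<^sub>R covd G A (\<lambda>q. PWvec G v m mu q (B q)) p)
        + (dirf A rho p *\<^sub>R B p + rho p *\<^sub>R covd G A B p)"
    using covd_add[OF smooth_components_on_add[OF open_U smooth(1,2)] smooth(3) p] covd_add[OF smooth(1,2) p]
      covd_scaleR[OF smooth_sigma smooth_components_on_PWvec[OF B] p] covd_scaleR[OF smooth_rho B p]
    by simp
  then show ?thesis
    unfolding nablaW_def ttop_def tmid_def tbot_def
    using gm_covd_PWvec[OF A B, of b] gm_PWvec[OF p]
    by (simp add: gm_linear algebra_simps)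
qed

lemma gm_mid_nablaW:
  "gm G p (tmid (nablaW G v m mu A (sigma, omega, rho)) p) (axis b 1)
    = gm G p (covd G A omega p) (axis b 1) + sigma p * PW G v m mu p (A p) (axis b 1) + rho p * gm G p (A p) (axis b 1)"
  unfolding nablaW_def ttop_def tmid_def tbot_def by (simp add: gm_linear gm_PWvec[OF p])

lemma top_curvW:
  assumes X: "smooth_components_on U X" and Z: "smooth_components_on U Z"
  shows "ttop (curvW G v m mu X Z (sigma, omega, rho)) p = 0"
  unfolding curvW_def tractor_components
  using top_nablaW_nablaW[OF X Z] top_nablaW_nablaW[OF Z X] top_nablaW[of "lie X Z"]
    dirf_commutator[OF X Z smooth_sigma p]
    gm_sym[OF p, of "X p" "Z p"] PW_sym[OF p, of "X p" "Z p"]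
    gm_sym[OF p, of "covd G X omega p" "Z p"] gm_sym[OF p, of "covd G Z omega p" "X p"]
  unfolding lie_eq_covd_diff[OF p] by (simp add: gm_linear)

lemma bot_curvW:
  assumes X: "smooth_components_on U X" and Z: "smooth_components_on U Z"
  shows "tbot (curvW G v m mu X Z (sigma, omega, rho)) p = dPW G v m mu p (X p) (Z p) (omega p)"
  unfolding curvW_def tractor_components dPW_eq_cov_PW
  using bot_nablaW_nablaW[OF X Z] bot_nablaW_nablaW[OF Z X] bot_nablaW[of "lie X Z"]
    dirf_commutator[OF X Z smooth_rho p]
    PW_sym[OF p, of "X p" "Z p"] PW_PWvec_sym[OF p, of "X p" "Z p"]
  unfolding lie_eq_covd_diff[OF p] by (simp add: PW_linear_left)

lemma mid_curvW:
  assumes X: "smooth_components_on U X" and Z: "smooth_components_on U Z"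
  shows "tmid (curvW G v m mu X Z (sigma, omega, rho)) p
    = sharp G p (\<lambda>w. AW G v m mu X Z omega p w - sigma p * dPW G v m mu p (X p) (Z p) w)"
proof (rule gm_axis_eq_imp_eq[OF p])
  fix b
  show "gm G p (tmid (curvW G v m mu X Z (sigma, omega, rho)) p) (axis b 1)
    = gm G p (sharp G p (\<lambda>w. AW G v m mu X Z omega p w - sigma p * dPW G v m mu p (X p) (Z p) w)) (axis b 1)"
    unfolding curvW_def tractor_components gm_sharp[OF p] AW_def Rm_def KN_PW_g_def rmvec_def dPW_eq_cov_PW
    using gm_mid_nablaW_nablaW[OF X Z, of b] gm_mid_nablaW_nablaW[OF Z X, of b] gm_mid_nablaW[of "lie X Z" b]
      gm_sym[OF p, of "omega p" "X p"] gm_sym[OF p, of "omega p" "Z p"]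
    unfolding lie_eq_covd_diff[OF p] by (simp add: gm_linear PW_linear_left algebra_simps)
qed

end

theorem proposition6p4:
  fixes U :: "(real^'n::finite) set"
    and G :: "real^'n \<Rightarrow> real^'n^'n"
    and v :: "real^'n \<Rightarrow> real"
    and m mu :: real
    and X Z :: "real^'n \<Rightarrow> real^'n"
    and sigma rho :: "real^'n \<Rightarrow> real"
    and omega :: "real^'n \<Rightarrow> real^'n"
    and p :: "real^'n"
  assumes "open U"
    and "CARD('n) \<ge> 3"
    and "m \<noteq> - real CARD('n)" and "m \<noteq> 1 - real CARD('n)" and "m \<noteq> 2 - real CARD('n)"
    and "riemannian_metric_on U G"
    and "smooth_on U v" and "\<forall>q\<in>U. v q > 0"
    and "smooth_on U X" and "smooth_on U Z"
    and "smooth_on U sigma" and "smooth_on U omega" and "smooth_on U rho"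
    and "p \<in> U"
  shows "ttop (curvW G v m mu X Z (sigma, omega, rho)) p = 0 \<and>
         tmid (curvW G v m mu X Z (sigma, omega, rho)) p =
           sharp G p (\<lambda>w. AW G v m mu X Z omega p w - sigma p * dPW G v m mu p (X p) (Z p) w) \<and>
         tbot (curvW G v m mu X Z (sigma, omega, rho)) p = dPW G v m mu p (X p) (Z p) (omega p)"
proof -
  interpret tractor_at U G v m mu sigma rho omega p
    by unfold_locales (use assms smooth_on_imp_smooth_components_on in auto)
  have X: "smooth_components_on U X" and Z: "smooth_components_on U Z"
    using assms(1,9,10) smooth_on_imp_smooth_components_on by blast+
  show ?thesis using top_curvW[OF X Z] mid_curvW[OF X Z] bot_curvW[OF X Z] by blast
qed

end
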